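(* For every $n\ge1$, $\lambda^{(0)}_{2n-1}\equiv0$, and $$\lambda^{(0)}_{2n}(t,c)=\frac{p_{2n}(\lambda_0,c)}{(4\lambda_0^3-c)^{5n-1}}$$ for some polynomial $p_{2n}\in\mathbb C[\lambda_0,c]$ whose degree in $\lambda_0$ is at most $9n-2$.
   Context: Let $\eta$ be a large parameter and $c\in\mathbb C$. The Hamiltonian system $(H_{\rm II})$: $\frac{d\lambda}{dt}=\eta\nu$, $\frac{d\nu}{dt}=\eta(2\lambda^3+t\lambda+c)$. Let $\lambda_0(t,c)$ be a branch of the algebraic function defined by $2\lambda_0^3+t\lambda_0+c=0$ (so $6\lambda_0^2+t=(4\lambda_0^3-c)/\lambda_0$). The 0-parameter solution is the unique pair of formal power series $\lambda^{(0)}=\sum_{k\ge0}\eta^{-k}\lambda^{(0)}_k(t,c)$, $\nu^{(0)}=\sum_{k\ge0}\eta^{-k}\nu^{(0)}_k(t,c)$ solving $(H_{\rm II})$ formally with $\lambda^{(0)}_0=\lambda_0$, $\nu^{(0)}_0=0$; equivalently $(6\lambda_0^2+t)\lambda^{(0)}_k+2\sum_{k_1+k_2+k_3=k,\,0\le k_j<k}\lambda^{(0)}_{k_1}\lambda^{(0)}_{k_2}\lambda^{(0)}_{k_3}=\frac{d^2\lambda^{(0)}_{k-2}}{dt^2}$ for $k\ge1$ (with $\lambda^{(0)}_{-1}=0$). *)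

theory Defs
  imports "HOL-Analysis.Analysis" "HOL-Computational_Algebra.Polynomial"
begin

text \<open>Given the list L = [lambda_0, ..., lambda_(k-1)] (as functions of t), compute lambda_k
  from the recursion
  (6 lambda_0^2 + t) lambda_k + 2 * sum_{k1+k2+k3=k, 0<=kj<k} lambda_k1 lambda_k2 lambda_k3
     = d^2/dt^2 lambda_(k-2)   (with lambda_(-1) = 0).\<close>
definition zs_step :: "(complex \<Rightarrow> complex) list \<Rightarrow> complex \<Rightarrow> complex" where
  "zs_step L = (let k = length L in
     (\<lambda>t. ((if 2 \<le> k then deriv (deriv (L ! (k - 2))) t else 0)
           - 2 * (\<Sum>k1\<le>k. \<Sum>k2\<le>k - k1.
                    if k1 < k \<and> k2 < k \<and> k - k1 - k2 < k
                    then (L ! k1) t * (L ! k2) t * (L ! (k - k1 - k2)) t else 0))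
          / (6 * (L ! 0) t ^ 2 + t)))"

primrec zs_list :: "(complex \<Rightarrow> complex) \<Rightarrow> nat \<Rightarrow> (complex \<Rightarrow> complex) list" where
  "zs_list l0 0 = [l0]"
| "zs_list l0 (Suc k) = zs_list l0 k @ [zs_step (zs_list l0 k)]"

definition zero_param_coeff :: "(complex \<Rightarrow> complex) \<Rightarrow> nat \<Rightarrow> complex \<Rightarrow> complex" where
  "zero_param_coeff l0 k = zs_list l0 k ! k"

definition is_branch :: "complex \<Rightarrow> complex set \<Rightarrow> (complex \<Rightarrow> complex) \<Rightarrow> bool" where
  "is_branch c U l0 \<longleftrightarrow> open U \<and> l0 holomorphic_on U \<and>
     (\<forall>t\<in>U. 2 * l0 t ^ 3 + t * l0 t + c = 0 \<and> 4 * l0 t ^ 3 - c \<noteq> 0)"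

text \<open>Evaluation of a bivariate polynomial p in C[lambda0, c], represented as a polynomial in
  lambda0 whose coefficients are polynomials in c.\<close>
definition eval2 :: "complex poly poly \<Rightarrow> complex \<Rightarrow> complex \<Rightarrow> complex" where
  "eval2 p x c = poly (map_poly (\<lambda>q. poly q c) p) x"

end

theory Submission
  imports Defs
begin

(* On a branch l0 of 2 l0^3 + t l0 + c = 0 put D = 4 l0^3 - c.  Implicit
   differentiation gives l0' = -l0^2/D and (6 l0^2 + t) l0 = D, so 1/(6 l0^2 + t) = l0/D.
   Call a family of functions F (indexed by c, U, l0) "branch rational of type (d, a)"
   if F = p(l0, c) / D^a on every branch, for one polynomial p with deg_l0 p <= d.
   This class is closed under sums, constant multiples and products (types add), under
   raising a to a' (degree grows by 3 (a' - a)), and differentiation maps type (d, a) to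
   (d + 4, a + 2), since d/dt (p/D^a) = (12 a l0^4 p - l0^2 D p_l0) / D^(a+2).
   The theorem then follows from the recursion in two inductions:
   (1) odd coefficients vanish, since every term of the recursion for an odd index
       involves an odd index below it;
   (2) the coefficient of index 2n is branch rational of type (9n-2, 5n-1) for n >= 1
       (type (1, 0) for n = 0), by counting types through the recursion. *)

section \<open>Evaluation of bivariate polynomials\<close>

lemma eval2_0 [simp]: "eval2 0 x c = 0"
  by (simp add: eval2_def)

lemma eval2_pCons [simp]: "eval2 (pCons a p) x c = poly a c + x * eval2 p x c"
  by (simp add: eval2_def map_poly_pCons)

lemma eval2_1 [simp]: "eval2 1 x c = 1"
  by (simp add: eval2_def)

lemma eval2_add [simp]: "eval2 (p + q) x c = eval2 p x c + eval2 q x c"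
proof -
  have "map_poly (\<lambda>r. poly r c) (p + q) = map_poly (\<lambda>r. poly r c) p + map_poly (\<lambda>r. poly r c) q"
    by (intro poly_eqI) (simp add: coeff_map_poly)
  then show ?thesis
    by (simp add: eval2_def)
qed

lemma eval2_smult [simp]: "eval2 (smult a p) x c = poly a c * eval2 p x c"
  by (simp add: eval2_def map_poly_smult)

lemma eval2_mult [simp]: "eval2 (p * q) x c = eval2 p x c * eval2 q x c"
  by (induction p) (simp_all add: algebra_simps)

lemma eval2_uminus [simp]: "eval2 (- p) x c = - eval2 p x c"
  by (induction p) (simp_all add: algebra_simps)

lemma eval2_diff [simp]: "eval2 (p - q) x c = eval2 p x c - eval2 q x c"
  using eval2_add[of p "- q"] by simp

lemma eval2_power [simp]: "eval2 (p ^ n) x c = eval2 p x c ^ n"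
  by (induction n) simp_all

lemma eval2_has_field_derivative:
  "((\<lambda>x. eval2 p x c) has_field_derivative eval2 (pderiv p) x c) (at x)"
proof (induction p)
  case (pCons a p)
  have "((\<lambda>x. poly a c + x * eval2 p x c) has_field_derivative
          0 + (x * eval2 (pderiv p) x c + 1 * eval2 p x c)) (at x)"
    by (intro DERIV_add DERIV_const DERIV_mult' DERIV_ident pCons.IH)
  then show ?case
    by (simp add: pderiv_pCons algebra_simps)
qed simp

definition var_l0 :: "complex poly poly" where
  "var_l0 = [:0, 1:]"

definition disc :: "complex poly poly" where
  "disc = [:[:0, -1:], 0, 0, [:4:]:]"

lemma eval2_var_l0 [simp]: "eval2 var_l0 x c = x"
  by (simp add: var_l0_def)

lemma eval2_disc [simp]: "eval2 disc x c = 4 * x ^ 3 - c"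
  by (simp add: disc_def power3_eq_cube algebra_simps)

lemma degree_var_l0_power: "degree (var_l0 ^ n) \<le> n"
  using degree_power_le[of var_l0 n] by (simp add: var_l0_def)

lemma degree_disc_power: "degree (disc ^ n) \<le> 3 * n"
  using degree_power_le[of disc n] by (simp add: disc_def)

lemma branch_open: "is_branch c U l0 \<Longrightarrow> open U"
  by (simp add: is_branch_def)

lemma branch_disc_nonzero: "is_branch c U l0 \<Longrightarrow> t \<in> U \<Longrightarrow> 4 * l0 t ^ 3 - c \<noteq> 0"
  by (simp add: is_branch_def)

text \<open>Multiplying the branch equation by 3 and subtracting: (6 l0^2 + t) l0 = D.\<close>

lemma branch_linear_coeff:
  assumes "is_branch c U l0" "t \<in> U"
  shows "(6 * l0 t ^ 2 + t) * l0 t = 4 * l0 t ^ 3 - c"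
proof -
  have "2 * l0 t ^ 3 + t * l0 t + c = 0"
    using assms by (simp add: is_branch_def)
  then show ?thesis
    by (simp add: algebra_simps power2_eq_square power3_eq_cube)
qed

text \<open>Implicit differentiation of the branch equation: l0' = -l0^2 / D.\<close>

lemma branch_has_field_derivative:
  assumes b: "is_branch c U l0" and t: "t \<in> U"
  shows "(l0 has_field_derivative - (l0 t ^ 2) / (4 * l0 t ^ 3 - c)) (at t)"
proof -
  have U: "open U" and hol: "l0 holomorphic_on U"
    using b by (auto simp: is_branch_def)
  define l' where "l' = deriv l0 t"
  have l0_deriv: "(l0 has_field_derivative l') (at t)"
    unfolding l'_def using holomorphic_derivI[OF hol U t] .
  have "((\<lambda>s. 2 * l0 s ^ 3 + s * l0 s + c) has_field_derivative
           6 * l0 t ^ 2 * l' + (l0 t + t * l')) (at t)"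
    by (rule derivative_eq_intros l0_deriv refl | simp)+
  moreover have "((\<lambda>s. 2 * l0 s ^ 3 + s * l0 s + c) has_field_derivative 0) (at t)"
    by (rule has_field_derivative_transform_within_open[OF DERIV_const U t])
      (use b in \<open>simp add: is_branch_def\<close>)
  ultimately have "(6 * l0 t ^ 2 + t) * l' = - l0 t"
    by (auto dest: DERIV_unique simp: algebra_simps add_eq_0_iff)
  then have "(6 * l0 t ^ 2 + t) * l0 t * l' = - (l0 t ^ 2)"
    by (metis mult.assoc mult.commute mult_minus_left power2_eq_square)
  then have "(4 * l0 t ^ 3 - c) * l' = - (l0 t ^ 2)"
    by (simp only: branch_linear_coeff[OF b t])
  then have "l' = - (l0 t ^ 2) / (4 * l0 t ^ 3 - c)"
    using branch_disc_nonzero[OF b t] by (simp add: field_simps)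
  then show ?thesis
    using l0_deriv by simp
qed

lemma deriv_vanishing_on_open:
  assumes "open U" "\<And>s. s \<in> U \<Longrightarrow> f s = 0" "t \<in> U"
  shows "deriv f t = 0"
proof -
  have "(f has_field_derivative 0) (at t)"
    by (rule has_field_derivative_transform_within_open[OF DERIV_const assms(1,3)])
      (simp add: assms(2))
  then show ?thesis
    by (rule DERIV_imp_deriv)
qed

section \<open>Branch rational families\<close>

definition branch_rational ::
    "(complex \<Rightarrow> complex set \<Rightarrow> (complex \<Rightarrow> complex) \<Rightarrow> complex \<Rightarrow> complex) \<Rightarrow> nat \<Rightarrow> nat \<Rightarrow> bool"
  where "branch_rational F d a \<longleftrightarrow> (\<exists>p :: complex poly poly. degree p \<le> d \<and>
     (\<forall>c U l0. is_branch c U l0 \<longrightarrow>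
        (\<forall>t\<in>U. F c U l0 t = eval2 p (l0 t) c / (4 * l0 t ^ 3 - c) ^ a)))"

lemma branch_rationalI:
  assumes "degree p \<le> d"
    and "\<And>c U l0 t. is_branch c U l0 \<Longrightarrow> t \<in> U \<Longrightarrow>
           F c U l0 t = eval2 p (l0 t) c / (4 * l0 t ^ 3 - c) ^ a"
  shows "branch_rational F d a"
  using assms unfolding branch_rational_def by blast

lemma branch_rationalE:
  assumes "branch_rational F d a"
  obtains p where "degree p \<le> d"
    and "\<And>c U l0 t. is_branch c U l0 \<Longrightarrow> t \<in> U \<Longrightarrow>
           F c U l0 t = eval2 p (l0 t) c / (4 * l0 t ^ 3 - c) ^ a"
  using assms unfolding branch_rational_def by blast

lemma branch_rational_cong:
  assumes "branch_rational F d a"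
    and "\<And>c U l0 t. is_branch c U l0 \<Longrightarrow> t \<in> U \<Longrightarrow> G c U l0 t = F c U l0 t"
  shows "branch_rational G d a"
  using assms unfolding branch_rational_def by metis

lemma branch_rational_zero:
  assumes "\<And>c U l0 t. is_branch c U l0 \<Longrightarrow> t \<in> U \<Longrightarrow> F c U l0 t = 0"
  shows "branch_rational F d a"
  by (rule branch_rationalI[of 0]) (simp_all add: assms)

lemma branch_rational_add:
  assumes "branch_rational F d a" "branch_rational G d a"
  shows "branch_rational (\<lambda>c U l0 t. F c U l0 t + G c U l0 t) d a"
proof -
  obtain p q where "degree p \<le> d" "degree q \<le> d"
    and "\<And>c U l0 t. is_branch c U l0 \<Longrightarrow> t \<in> U \<Longrightarrow>
           F c U l0 t = eval2 p (l0 t) c / (4 * l0 t ^ 3 - c) ^ a"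
    and "\<And>c U l0 t. is_branch c U l0 \<Longrightarrow> t \<in> U \<Longrightarrow>
           G c U l0 t = eval2 q (l0 t) c / (4 * l0 t ^ 3 - c) ^ a"
    using assms by (metis branch_rationalE)
  then show ?thesis
    by (intro branch_rationalI[of "p + q"])
      (simp_all add: degree_add_le add_divide_distrib)
qed

lemma branch_rational_cmult:
  assumes "branch_rational F d a"
  shows "branch_rational (\<lambda>c U l0 t. k * F c U l0 t) d a"
proof -
  obtain p where "degree p \<le> d"
    and "\<And>c U l0 t. is_branch c U l0 \<Longrightarrow> t \<in> U \<Longrightarrow>
           F c U l0 t = eval2 p (l0 t) c / (4 * l0 t ^ 3 - c) ^ a"
    using assms by (metis branch_rationalE)
  then show ?thesis
    by (intro branch_rationalI[of "smult [:k:] p"]) simp_all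
qed

lemma branch_rational_diff:
  assumes "branch_rational F d a" "branch_rational G d a"
  shows "branch_rational (\<lambda>c U l0 t. F c U l0 t - G c U l0 t) d a"
  using branch_rational_add[OF assms(1) branch_rational_cmult[OF assms(2), of "-1"]] by simp

lemma branch_rational_sum:
  assumes "finite I" "\<And>i. i \<in> I \<Longrightarrow> branch_rational (F i) d a"
  shows "branch_rational (\<lambda>c U l0 t. \<Sum>i\<in>I. F i c U l0 t) d a"
  using assms
  by (induction I rule: finite_induct)
    (auto intro: branch_rational_zero branch_rational_add)

lemma branch_rational_mult:
  assumes "branch_rational F d1 a1" "branch_rational G d2 a2"
  shows "branch_rational (\<lambda>c U l0 t. F c U l0 t * G c U l0 t) (d1 + d2) (a1 + a2)"
proof -
  obtain p q where "degree p \<le> d1" "degree q \<le> d2"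
    and "\<And>c U l0 t. is_branch c U l0 \<Longrightarrow> t \<in> U \<Longrightarrow>
           F c U l0 t = eval2 p (l0 t) c / (4 * l0 t ^ 3 - c) ^ a1"
    and "\<And>c U l0 t. is_branch c U l0 \<Longrightarrow> t \<in> U \<Longrightarrow>
           G c U l0 t = eval2 q (l0 t) c / (4 * l0 t ^ 3 - c) ^ a2"
    using assms by (metis branch_rationalE)
  then show ?thesis
    by (intro branch_rationalI[of "p * q"])
      (auto simp: power_add intro: order.trans[OF degree_mult_le])
qed

text \<open>Expanding p / D^a to (p D^(a'-a)) / D^a' trades a higher exponent for a higher degree.\<close>

lemma branch_rational_raise:
  assumes "branch_rational F d a" "a \<le> a'" "d + 3 * (a' - a) \<le> d'"
  shows "branch_rational F d' a'"
proof -
  obtain p where p_deg: "degree p \<le> d"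
    and F: "\<And>c U l0 t. is_branch c U l0 \<Longrightarrow> t \<in> U \<Longrightarrow>
           F c U l0 t = eval2 p (l0 t) c / (4 * l0 t ^ 3 - c) ^ a"
    using assms(1) by (metis branch_rationalE)
  have "degree (p * disc ^ (a' - a)) \<le> d'"
    using degree_mult_le[of p "disc ^ (a' - a)"] degree_disc_power[of "a' - a"] p_deg assms(3)
    by linarith
  moreover have "F c U l0 t = eval2 (p * disc ^ (a' - a)) (l0 t) c / (4 * l0 t ^ 3 - c) ^ a'"
    if "is_branch c U l0" "t \<in> U" for c U l0 t
  proof -
    have "a' = a + (a' - a)"
      using assms(2) by simp
    then have "(4 * l0 t ^ 3 - c) ^ a' = (4 * l0 t ^ 3 - c) ^ a * (4 * l0 t ^ 3 - c) ^ (a' - a)"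
      by (metis power_add)
    then show ?thesis
      using F[OF that] branch_disc_nonzero[OF that] by simp
  qed
  ultimately show ?thesis
    by (rule branch_rationalI)
qed

lemma branch_rational_l0: "branch_rational (\<lambda>c U l0 t. l0 t) 1 0"
  by (rule branch_rationalI[of var_l0]) (simp_all add: var_l0_def)

text \<open>The factor 1 / (6 l0^2 + t) of the recursion equals l0 / D.\<close>

lemma branch_rational_inverse_linear_coeff:
  "branch_rational (\<lambda>c U l0 t. 1 / (6 * l0 t ^ 2 + t)) 1 1"
proof (rule branch_rationalI[of var_l0])
  fix c U l0 t assume b: "is_branch c U l0" and t: "t \<in> U"
  have "l0 t \<noteq> 0"
    using branch_linear_coeff[OF b t] branch_disc_nonzero[OF b t] by auto
  then show "1 / (6 * l0 t ^ 2 + t) = eval2 var_l0 (l0 t) c / (4 * l0 t ^ 3 - c) ^ 1"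
    by (simp add: branch_linear_coeff[OF b t, symmetric])
qed (simp add: var_l0_def)

section \<open>Differentiation of branch rational families\<close>

text \<open>The numerator of d/dt (p / D^a): 12 a l0^4 p - l0^2 D p_l0.\<close>

definition deriv_numerator :: "nat \<Rightarrow> complex poly poly \<Rightarrow> complex poly poly" where
  "deriv_numerator a p = smult [:12 * of_nat a:] (var_l0 ^ 4 * p) - var_l0 ^ 2 * disc * pderiv p"

lemma degree_deriv_numerator:
  assumes "degree p \<le> d"
  shows "degree (deriv_numerator a p) \<le> d + 4"
proof -
  have "degree (smult [:12 * of_nat a:] (var_l0 ^ 4 * p)) \<le> d + 4"
    using degree_mult_le[of "var_l0 ^ 4" p] degree_var_l0_power[of 4] assms
      degree_smult_le[of "[:12 * of_nat a:]" "var_l0 ^ 4 * p"] by linarith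
  moreover have "degree (var_l0 ^ 2 * disc * pderiv p) \<le> d + 4"
  proof (cases "degree p = 0")
    case False
    then show ?thesis
      using degree_mult_le[of "var_l0 ^ 2 * disc" "pderiv p"]
        degree_mult_le[of "var_l0 ^ 2" disc] degree_var_l0_power[of 2]
        degree_disc_power[of 1] degree_pderiv[of p] assms by simp
  next
    case True
    then have "pderiv p = 0"
      using pderiv_eq_0_iff by blast
    then show ?thesis
      by simp
  qed
  ultimately show ?thesis
    unfolding deriv_numerator_def using degree_diff_le by blast
qed

lemma branch_quotient_has_field_derivative:
  assumes b: "is_branch c U l0" and t: "t \<in> U"
  shows "((\<lambda>s. eval2 p (l0 s) c * inverse (4 * l0 s ^ 3 - c) ^ a) has_field_derivative
           eval2 (deriv_numerator a p) (l0 t) c * inverse (4 * l0 t ^ 3 - c) ^ (a + 2)) (at t)"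
proof -
  define D where "D = 4 * l0 t ^ 3 - c"
  have D_nz: "D \<noteq> 0"
    using branch_disc_nonzero[OF b t] by (simp add: D_def)
  have l0_deriv: "(l0 has_field_derivative - (l0 t ^ 2) / D) (at t)"
    using branch_has_field_derivative[OF b t] by (simp add: D_def)
  have inv_D_deriv: "((\<lambda>s. inverse (4 * l0 s ^ 3 - c)) has_field_derivative
      12 * l0 t ^ 4 * inverse D ^ 3) (at t)"
    unfolding D_def
    by (rule derivative_eq_intros l0_deriv[unfolded D_def] refl | use D_nz in
        \<open>simp add: D_def field_simps power2_eq_square power3_eq_cube power4_eq_xxxx\<close>)+
  show ?thesis
  proof (induction a)
    case 0
    have "((\<lambda>s. eval2 p (l0 s) c) has_field_derivative
            eval2 (pderiv p) (l0 t) c * (- (l0 t ^ 2) / D)) (at t)"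
      by (rule DERIV_chain2[OF eval2_has_field_derivative l0_deriv])
    moreover have "eval2 (pderiv p) (l0 t) c * (- (l0 t ^ 2) / D)
        = eval2 (deriv_numerator 0 p) (l0 t) c * inverse D ^ 2"
      using D_nz by (simp add: deriv_numerator_def D_def[symmetric] field_simps power2_eq_square)
    ultimately show ?case
      by (simp add: D_def power2_eq_square)
  next
    case (Suc a)
    have "((\<lambda>s. eval2 p (l0 s) c * inverse (4 * l0 s ^ 3 - c) ^ Suc a) has_field_derivative
        eval2 (deriv_numerator a p) (l0 t) c * inverse D ^ (a + 2) * inverse D
         + (eval2 p (l0 t) c * inverse D ^ a) * (12 * l0 t ^ 4 * inverse D ^ 3)) (at t)"
      using DERIV_mult[OF Suc.IH inv_D_deriv] unfolding D_def by (simp add: algebra_simps)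
    moreover have "eval2 (deriv_numerator a p) (l0 t) c * inverse D ^ (a + 2) * inverse D
         + (eval2 p (l0 t) c * inverse D ^ a) * (12 * l0 t ^ 4 * inverse D ^ 3)
       = eval2 (deriv_numerator (Suc a) p) (l0 t) c * inverse D ^ (Suc a + 2)"
      by (simp add: deriv_numerator_def algebra_simps power_add power3_eq_cube)
    ultimately show ?case
      by (simp only: D_def)
  qed
qed

lemma branch_rational_deriv:
  assumes "branch_rational F d a"
  shows "branch_rational (\<lambda>c U l0. deriv (F c U l0)) (d + 4) (a + 2)"
proof -
  obtain p where p_deg: "degree p \<le> d"
    and F: "\<And>c U l0 t. is_branch c U l0 \<Longrightarrow> t \<in> U \<Longrightarrow>
           F c U l0 t = eval2 p (l0 t) c / (4 * l0 t ^ 3 - c) ^ a"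
    using assms by (metis branch_rationalE)
  show ?thesis
  proof (rule branch_rationalI[OF degree_deriv_numerator[OF p_deg]])
    fix c U l0 t assume b: "is_branch c U l0" and t: "t \<in> U"
    have "(F c U l0 has_field_derivative
            eval2 (deriv_numerator a p) (l0 t) c * inverse (4 * l0 t ^ 3 - c) ^ (a + 2)) (at t)"
      by (rule has_field_derivative_transform_within_open
          [OF branch_quotient_has_field_derivative[OF b t] branch_open[OF b] t])
        (simp add: F[OF b] divide_inverse power_inverse)
    then show "deriv (F c U l0) t
        = eval2 (deriv_numerator a p) (l0 t) c / (4 * l0 t ^ 3 - c) ^ (a + 2)"
      by (simp add: DERIV_imp_deriv divide_inverse power_inverse)
  qed
qed

text \<open>The branch itself is better than the general rule predicts: l0' = -l0^2 / D has
  type (2, 1) rather than (5, 2).\<close>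

lemma branch_rational_deriv_l0: "branch_rational (\<lambda>c U l0. deriv l0) 2 1"
proof (rule branch_rationalI[of "- (var_l0 ^ 2)"])
  show "degree (- (var_l0 ^ 2)) \<le> 2"
    using degree_var_l0_power[of 2] by simp
  fix c U l0 t assume "is_branch c U l0" "t \<in> U"
  then show "deriv l0 t = eval2 (- (var_l0 ^ 2)) (l0 t) c / (4 * l0 t ^ 3 - c) ^ 1"
    using DERIV_imp_deriv[OF branch_has_field_derivative] by simp
qed

section \<open>The recursion for the coefficients\<close>

lemma length_zs_list: "length (zs_list l0 k) = Suc k"
  by (induction k) simp_all

lemma nth_zs_list: "i \<le> k \<Longrightarrow> zs_list l0 k ! i = zero_param_coeff l0 i"
proof (induction k)
  case (Suc k)
  show ?case
  proof (cases "i \<le> k")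
    case True
    then show ?thesis
      using Suc.IH by (simp add: nth_append length_zs_list)
  next
    case False
    then have "i = Suc k"
      using Suc.prems by simp
    then show ?thesis
      by (simp add: zero_param_coeff_def)
  qed
qed (simp add: zero_param_coeff_def)

lemma zero_param_coeff_0: "zero_param_coeff l0 0 = l0"
  by (simp add: zero_param_coeff_def)

definition prev_deriv2 :: "(complex \<Rightarrow> complex) \<Rightarrow> nat \<Rightarrow> complex \<Rightarrow> complex" where
  "prev_deriv2 l0 k t = (if 2 \<le> k then deriv (deriv (zero_param_coeff l0 (k - 2))) t else 0)"

definition cubic_term :: "(complex \<Rightarrow> complex) \<Rightarrow> nat \<Rightarrow> nat \<Rightarrow> nat \<Rightarrow> complex \<Rightarrow> complex" where
  "cubic_term l0 k k1 k2 t = (if k1 < k \<and> k2 < k \<and> k - k1 - k2 < k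
     then zero_param_coeff l0 k1 t * zero_param_coeff l0 k2 t * zero_param_coeff l0 (k - k1 - k2) t
     else 0)"

definition cubic_sum :: "(complex \<Rightarrow> complex) \<Rightarrow> nat \<Rightarrow> complex \<Rightarrow> complex" where
  "cubic_sum l0 k t = (\<Sum>k1\<le>k. \<Sum>k2\<le>k - k1. cubic_term l0 k k1 k2 t)"

lemma zero_param_coeff_rec:
  assumes "k \<noteq> 0"
  shows "zero_param_coeff l0 k t
           = (prev_deriv2 l0 k t - 2 * cubic_sum l0 k t) / (6 * l0 t ^ 2 + t)"
proof -
  obtain k' where k: "k = Suc k'"
    using assms not0_implies_Suc by blast
  have "zero_param_coeff l0 k = zs_step (zs_list l0 k')"
    by (simp add: k zero_param_coeff_def nth_append length_zs_list)
  then show ?thesis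
    unfolding zs_step_def Let_def length_zs_list prev_deriv2_def cubic_sum_def cubic_term_def k
    by (simp add: nth_zs_list zero_param_coeff_0 cong: if_cong)
qed

text \<open>Among three indices summing to an odd number, one is odd; so for odd k every cubic
  term involves an odd index below k.\<close>

lemma cubic_term_odd_index:
  fixes k k1 k2 :: nat
  assumes "odd k" "k2 \<le> k - k1" "k1 < k" "k2 < k" "k - k1 - k2 < k"
  shows "\<exists>j \<in> {k1, k2, k - k1 - k2}. odd j \<and> j < k"
proof -
  have "k1 + k2 + (k - k1 - k2) = k"
    using assms(2,3) by arith
  then have "odd k1 \<or> odd k2 \<or> odd (k - k1 - k2)"
    using \<open>odd k\<close> by (metis even_add)
  then show ?thesis
    using assms by auto
qed

section \<open>Odd coefficients vanish\<close>

theorem odd_zero_param_coeff_vanishes: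
  assumes b: "is_branch c U l0" and "odd k" "t \<in> U"
  shows "zero_param_coeff l0 k t = 0"
  using assms(2,3)
proof (induction k arbitrary: t rule: less_induct)
  case (less k)
  have IH: "\<And>j s. j < k \<Longrightarrow> odd j \<Longrightarrow> s \<in> U \<Longrightarrow> zero_param_coeff l0 j s = 0"
    using less.IH by blast
  have "prev_deriv2 l0 k t = 0"
  proof (cases "2 \<le> k")
    case True
    have "odd (k - 2)"
      using True \<open>odd k\<close> by presburger
    then have "zero_param_coeff l0 (k - 2) s = 0" if "s \<in> U" for s
      using IH True that by simp
    then have "deriv (zero_param_coeff l0 (k - 2)) s = 0" if "s \<in> U" for s
      using deriv_vanishing_on_open[OF branch_open[OF b]] that by blast
    then show ?thesis
      using deriv_vanishing_on_open[OF branch_open[OF b] _ \<open>t \<in> U\<close>] True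
      by (simp add: prev_deriv2_def)
  qed (simp add: prev_deriv2_def)
  moreover have "cubic_term l0 k k1 k2 t = 0" if le: "k2 \<le> k - k1" for k1 k2
  proof (cases "k1 < k \<and> k2 < k \<and> k - k1 - k2 < k")
    case True
    then obtain j where j: "j \<in> {k1, k2, k - k1 - k2}" "odd j" "j < k"
      using cubic_term_odd_index[OF \<open>odd k\<close> le] by blast
    then have "zero_param_coeff l0 j t = 0"
      using IH \<open>t \<in> U\<close> by blast
    then show ?thesis
      using j True by (auto simp: cubic_term_def)
  qed (auto simp: cubic_term_def)
  moreover have "k \<noteq> 0"
    using \<open>odd k\<close> by presburger
  ultimately show ?case
    by (simp add: zero_param_coeff_rec cubic_sum_def)
qed

section \<open>Even coefficients are branch rational\<close>

text \<open>The type (numerator degree, denominator exponent) of the coefficient of index 2m.\<close>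

definition num_degree :: "nat \<Rightarrow> nat" where
  "num_degree m = (if m = 0 then 1 else 9 * m - 2)"

definition den_exponent :: "nat \<Rightarrow> nat" where
  "den_exponent m = (if m = 0 then 0 else 5 * m - 1)"

text \<open>Three earlier even coefficients with indices 2i + 2j + 2l = 2n multiply to a family
  that fits into type (9n - 3, 5n - 2), the type required before the final factor l0 / D.\<close>

lemma cubic_type_bound:
  assumes "i + j + l = n" "i < n" "j < n" "l < n"
  shows "den_exponent i + den_exponent j + den_exponent l \<le> 5 * n - 2"
    and "num_degree i + num_degree j + num_degree l
           + 3 * (5 * n - 2 - (den_exponent i + den_exponent j + den_exponent l)) \<le> 9 * n - 3"
  using assms unfolding num_degree_def den_exponent_def by (auto split: if_splits)

context
  fixes n :: nat
  assumes n_pos: "n \<ge> 1"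
    and IH: "\<And>m. m < n \<Longrightarrow>
      branch_rational (\<lambda>c U l0. zero_param_coeff l0 (2 * m)) (num_degree m) (den_exponent m)"
begin

text \<open>The second derivative adds (8, 4) to the type of index 2n - 2; for n = 1 the sharper
  type (2, 1) of l0' is needed to land in (6, 3).\<close>

lemma branch_rational_prev_deriv2:
  "branch_rational (\<lambda>c U l0. prev_deriv2 l0 (2 * n)) (9 * n - 3) (5 * n - 2)"
proof (cases "n = 1")
  case True
  have "branch_rational (\<lambda>c U l0. deriv (deriv l0)) (2 + 4) (1 + 2)"
    by (intro branch_rational_deriv branch_rational_deriv_l0)
  then have "branch_rational (\<lambda>c U l0. deriv (deriv (zero_param_coeff l0 0))) (9 * n - 3) (5 * n - 2)"
    by (simp add: True zero_param_coeff_0 numeral_3_eq_3)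
  then show ?thesis
    by (rule branch_rational_cong) (simp add: prev_deriv2_def True)
next
  case False
  have "branch_rational (\<lambda>c U l0. deriv (deriv (zero_param_coeff l0 (2 * (n - 1)))))
          (num_degree (n - 1) + 4 + 4) (den_exponent (n - 1) + 2 + 2)"
    using IH[of "n - 1"] n_pos by (intro branch_rational_deriv) simp
  moreover have "num_degree (n - 1) + 4 + 4 = 9 * n - 3" "den_exponent (n - 1) + 2 + 2 = 5 * n - 2"
    using False n_pos by (simp_all add: num_degree_def den_exponent_def)
  ultimately show ?thesis
    using n_pos by (auto simp: prev_deriv2_def right_diff_distrib' elim: branch_rational_cong)
qed

text \<open>A cubic term either contains an odd index, hence vanishes, or is a product of three
  earlier even coefficients.\<close>

lemma branch_rational_cubic_term:
  assumes "k2 \<le> 2 * n - k1"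
  shows "branch_rational (\<lambda>c U l0. cubic_term l0 (2 * n) k1 k2) (9 * n - 3) (5 * n - 2)"
proof (cases "k1 < 2 * n \<and> k2 < 2 * n \<and> 2 * n - k1 - k2 < 2 * n")
  case True
  define k3 where "k3 = 2 * n - k1 - k2"
  have sum: "k1 + k2 + k3 = 2 * n"
    unfolding k3_def using assms True by arith
  show ?thesis
  proof (cases "even k1 \<and> even k2 \<and> even k3")
    case even: True
    define i j l where "i = k1 div 2" and "j = k2 div 2" and "l = k3 div 2"
    have idx: "k1 = 2 * i" "k2 = 2 * j" "k3 = 2 * l"
      using even by (simp_all add: i_def j_def l_def)
    have bounds: "i + j + l = n" "i < n" "j < n" "l < n"
      using sum True idx k3_def by simp_all
    have "branch_rational (\<lambda>c U l0 t. zero_param_coeff l0 k1 t * zero_param_coeff l0 k2 t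
                                       * zero_param_coeff l0 k3 t)
        (num_degree i + num_degree j + num_degree l) (den_exponent i + den_exponent j + den_exponent l)"
      unfolding idx by (intro branch_rational_mult IH bounds)
    then have "branch_rational (\<lambda>c U l0 t. zero_param_coeff l0 k1 t * zero_param_coeff l0 k2 t
                                       * zero_param_coeff l0 k3 t) (9 * n - 3) (5 * n - 2)"
      by (rule branch_rational_raise) (use cubic_type_bound[OF bounds] in simp_all)
    then show ?thesis
      by (rule branch_rational_cong) (use True in \<open>simp add: cubic_term_def k3_def\<close>)
  next
    case False
    then obtain j where "j \<in> {k1, k2, k3}" "odd j" "j < 2 * n"
      using True k3_def by auto
    then show ?thesis
      by (intro branch_rational_zero)
        (auto simp: cubic_term_def k3_def odd_zero_param_coeff_vanishes)
  qed
qed (intro branch_rational_zero, auto simp: cubic_term_def)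

lemma branch_rational_even_step:
  "branch_rational (\<lambda>c U l0. zero_param_coeff l0 (2 * n)) (num_degree n) (den_exponent n)"
proof -
  have "branch_rational (\<lambda>c U l0 t. prev_deriv2 l0 (2 * n) t - 2 * cubic_sum l0 (2 * n) t)
          (9 * n - 3) (5 * n - 2)"
    unfolding cubic_sum_def
    by (intro branch_rational_diff branch_rational_prev_deriv2 branch_rational_cmult
        branch_rational_sum branch_rational_cubic_term finite_atMost) simp
  then have "branch_rational (\<lambda>c U l0 t. (prev_deriv2 l0 (2 * n) t - 2 * cubic_sum l0 (2 * n) t)
          * (1 / (6 * l0 t ^ 2 + t))) (9 * n - 3 + 1) (5 * n - 2 + 1)"
    by (rule branch_rational_mult[OF _ branch_rational_inverse_linear_coeff])
  moreover have "9 * n - 3 + 1 = num_degree n" "5 * n - 2 + 1 = den_exponent n"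
    using n_pos by (simp_all add: num_degree_def den_exponent_def)
  ultimately show ?thesis
    using n_pos by (auto simp: zero_param_coeff_rec elim: branch_rational_cong)
qed

end

theorem branch_rational_even_coeff:
  "branch_rational (\<lambda>c U l0. zero_param_coeff l0 (2 * n)) (num_degree n) (den_exponent n)"
proof (induction n rule: less_induct)
  case (less n)
  show ?case
  proof (cases "n = 0")
    case True
    then show ?thesis
      using branch_rational_l0 by (simp add: zero_param_coeff_0 num_degree_def den_exponent_def)
  next
    case False
    then show ?thesis
      using branch_rational_even_step less.IH by simp
  qed
qed

theorem mainTheorem3:
  fixes n :: nat
  assumes "n \<ge> 1"
  shows "(\<forall>c U l0. is_branch c U l0 \<longrightarrow>
            (\<forall>t\<in>U. zero_param_coeff l0 (2 * n - 1) t = 0))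
       \<and> (\<exists>p :: complex poly poly. degree p \<le> 9 * n - 2 \<and>
            (\<forall>c U l0. is_branch c U l0 \<longrightarrow>
               (\<forall>t\<in>U. zero_param_coeff l0 (2 * n) t
                        = eval2 p (l0 t) c / (4 * l0 t ^ 3 - c) ^ (5 * n - 1))))"
proof
  have "odd (2 * n - 1)"
    using assms by presburger
  then show "\<forall>c U l0. is_branch c U l0 \<longrightarrow> (\<forall>t\<in>U. zero_param_coeff l0 (2 * n - 1) t = 0)"
    using odd_zero_param_coeff_vanishes by blast
next
  have "num_degree n = 9 * n - 2" "den_exponent n = 5 * n - 1"
    using assms by (simp_all add: num_degree_def den_exponent_def)
  then show "\<exists>p :: complex poly poly. degree p \<le> 9 * n - 2 \<and>
            (\<forall>c U l0. is_branch c U l0 \<longrightarrow>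
               (\<forall>t\<in>U. zero_param_coeff l0 (2 * n) t
                        = eval2 p (l0 t) c / (4 * l0 t ^ 3 - c) ^ (5 * n - 1)))"
    using branch_rational_even_coeff[of n] unfolding branch_rational_def by simp
qed

end
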